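(* Let $n\ge 1$ and consider the transformation $(u_1,\ldots,u_n)\mapsto(x_1,\ldots,x_n)$ given by $$x_i=\frac{\sin u_i}{\cos u_{i+1}}\quad(1\le i\le n),$$ with indices taken cyclically so that $u_{n+1}:=u_1$, defined at points where all $\cos u_i\neq 0$. Then its Jacobian determinant is $$\frac{\partial(x_1,\ldots,x_n)}{\partial(u_1,\ldots,u_n)}=1\pm (x_1x_2\cdots x_n)^2,$$ where the sign is $-$ if $n$ is even and $+$ if $n$ is odd. *)

theory Defs
  imports "HOL-Analysis.Analysis" "HOL-Combinatorics.Permutations"
begin

text \<open>Coordinates are indexed 0..n-1 (paper: 1..n); cyclic successor of i is (i+1) mod n.
  The map (u_0,...,u_{n-1}) to (x_0,...,x_{n-1}), x_i = sin u_i / cos u_{i+1 mod n}.\<close>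
definition cyc_map :: "nat \<Rightarrow> (nat \<Rightarrow> real) \<Rightarrow> nat \<Rightarrow> real" where
  "cyc_map n u i = sin (u i) / cos (u (Suc i mod n))"

definition partial_deriv :: "((nat \<Rightarrow> real) \<Rightarrow> real) \<Rightarrow> (nat \<Rightarrow> real) \<Rightarrow> nat \<Rightarrow> real" where
  "partial_deriv f u j = deriv (\<lambda>t. f (u(j := t))) (u j)"

definition det_nat :: "nat \<Rightarrow> (nat \<Rightarrow> nat \<Rightarrow> real) \<Rightarrow> real" where
  "det_nat n A = (\<Sum>p\<in>{p. p permutes {..<n}}. of_int (sign p) * (\<Prod>i<n. A i (p i)))"

definition jacobian_det :: "nat \<Rightarrow> ((nat \<Rightarrow> real) \<Rightarrow> nat \<Rightarrow> real) \<Rightarrow> (nat \<Rightarrow> real) \<Rightarrow> real" where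
  "jacobian_det n F u = det_nat n (\<lambda>i j. partial_deriv (\<lambda>v. F v i) u j)"

end

theory Submission
  imports Defs
begin

text \<open>For \<open>n \<ge> 2\<close> the partial derivative of \<open>x\<^sub>i\<close> with respect to \<open>u\<^sub>j\<close> vanishes unless
  \<open>j = i\<close> or \<open>j = i + 1 (mod n)\<close>, so the only permutations contributing to the Leibniz
  expansion of the Jacobian are the identity and the cyclic shift, an \<open>n\<close>-cycle of sign
  \<open>(-1)\<^sup>n\<^sup>-\<^sup>1\<close>. The diagonal entries \<open>cos u\<^sub>i / cos u\<^sub>i\<^sub>+\<^sub>1\<close> multiply to 1, and the entries
  \<open>x\<^sub>i tan u\<^sub>i\<^sub>+\<^sub>1\<close> multiply to \<open>(\<Prod> x\<^sub>i)(\<Prod> tan u\<^sub>i) = (\<Prod> x\<^sub>i)\<^sup>2\<close>. For \<open>n = 1\<close> the map is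
  \<open>tan\<close>, whose derivative is \<open>1 + tan\<^sup>2\<close>.\<close>

definition cyclic_succ :: "nat \<Rightarrow> nat \<Rightarrow> nat" where
  "cyclic_succ n i = (if i < n then Suc i mod n else i)"

lemma cyclic_succ_Suc:
  assumes "n \<ge> 1"
  shows "cyclic_succ (Suc n) = cyclic_succ n \<circ> Transposition.transpose (n - 1) n"
proof
  fix i
  show "cyclic_succ (Suc n) i = (cyclic_succ n \<circ> Transposition.transpose (n - 1) n) i"
    using assms by (cases "i < n - 1"; cases "i = n - 1"; cases "i = n")
      (auto simp: cyclic_succ_def Transposition.transpose_def)
qed

lemma cyclic_succ_permutes_sign:
  assumes "n \<ge> 1"
  shows "cyclic_succ n permutes {..<n} \<and> sign (cyclic_succ n) = (-1) ^ (n - 1)"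
  using assms
proof (induction n rule: dec_induct)
  case base
  have "cyclic_succ 1 = id" by (auto simp: cyclic_succ_def)
  then show ?case by (metis permutes_id sign_id diff_self_eq_0 power_0)
next
  case (step m)
  let ?\<tau> = "Transposition.transpose (m - 1) m"
  have shift: "cyclic_succ m permutes {..<Suc m}"
    using step.IH permutes_subset by fastforce
  have swap: "?\<tau> permutes {..<Suc m}"
    by (rule permutes_swap_id) auto
  have "cyclic_succ (Suc m) permutes {..<Suc m}"
    unfolding cyclic_succ_Suc[OF step.hyps(1)] by (rule permutes_compose[OF swap shift])
  moreover have "sign (cyclic_succ (Suc m)) = sign (cyclic_succ m) * sign ?\<tau>"
    unfolding cyclic_succ_Suc[OF step.hyps(1)]
    by (intro sign_compose permutes_imp_permutation[OF finite_lessThan, of _ "Suc m"] shift swap)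
  moreover have "sign ?\<tau> = -1" using step.hyps(1) by (simp add: sign_swap_id)
  ultimately show ?case using step.IH step.hyps(1) by (cases m) auto
qed

lemma cyclic_succ_permutes: "cyclic_succ n permutes {..<n}"
proof (cases "n = 0")
  case True
  then have "cyclic_succ n = id" by (simp add: fun_eq_iff cyclic_succ_def)
  then show ?thesis using True by (simp add: permutes_id)
next
  case False
  then show ?thesis using cyclic_succ_permutes_sign by simp
qed

lemma sign_cyclic_succ: "n \<ge> 1 \<Longrightarrow> sign (cyclic_succ n) = (-1) ^ (n - 1)"
  using cyclic_succ_permutes_sign by blast

lemma Suc_mod_neq:
  assumes "n \<ge> 2" "i < n"
  shows "Suc i mod n \<noteq> i"
  using assms by (cases "Suc i = n") auto

lemma prod_cyclic_shift: "(\<Prod>i<n. g (Suc i mod n)) = (\<Prod>i<n. g i)"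
proof -
  have "(\<Prod>i<n. g (Suc i mod n)) = (\<Prod>i<n. g (cyclic_succ n i))"
    by (rule prod.cong) (auto simp: cyclic_succ_def)
  also have "\<dots> = (\<Prod>i<n. g i)"
    using prod.reindex_bij_betw[OF permutes_imp_bij[OF cyclic_succ_permutes]] by simp
  finally show ?thesis .
qed

text \<open>Once \<open>p\<close> moves some \<open>k\<close> to \<open>k + 1\<close>, injectivity forbids \<open>k + 1\<close> to be fixed, so \<open>p\<close>
  moves it on as well, and so on around the cycle.\<close>

lemma permutes_succ_or_fixed:
  assumes n: "n \<ge> 2" and p: "p permutes {..<n}"
    and h: "\<forall>i<n. p i = i \<or> p i = Suc i mod n"
  shows "p = id \<or> p = cyclic_succ n"
proof (cases "\<forall>i<n. p i = i")
  case True
  then have "p = id" using permutes_not_in[OF p] by (metis eq_id_iff lessThan_iff)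
  then show ?thesis by blast
next
  case False
  then obtain k where k: "k < n" "p k = Suc k mod n" using h by blast
  have moved: "p ((k + m) mod n) = Suc ((k + m) mod n) mod n" for m
  proof (induction m)
    case 0
    then show ?case using k by simp
  next
    case (Suc m)
    define a where "a = (k + m) mod n"
    define b where "b = Suc a mod n"
    have "a < n" "b < n" using n by (simp_all add: a_def b_def)
    have "p a = b" using Suc by (simp add: a_def b_def)
    moreover have "a \<noteq> b" using Suc_mod_neq[OF n \<open>a < n\<close>] by (simp add: b_def)
    ultimately have "p b \<noteq> b" using permutes_inj[OF p] by (metis injD)
    then have "p b = Suc b mod n" using h \<open>b < n\<close> by blast
    moreover have "(k + Suc m) mod n = b" by (simp add: a_def b_def mod_Suc_eq)
    ultimately show ?case by simp
  qed
  have "p i = cyclic_succ n i" for i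
  proof (cases "i < n")
    case True
    then have "(k + (i + n - k)) mod n = i" using k by simp
    then show ?thesis using moved[of "i + n - k"] True by (simp add: cyclic_succ_def)
  next
    case False
    then show ?thesis using permutes_not_in[OF p] by (simp add: cyclic_succ_def)
  qed
  then show ?thesis by blast
qed

lemma det_nat_cyclic_bidiagonal:
  assumes n: "n \<ge> 2"
    and zero: "\<And>i j. i < n \<Longrightarrow> j < n \<Longrightarrow> j \<noteq> i \<Longrightarrow> j \<noteq> Suc i mod n \<Longrightarrow> A i j = 0"
  shows "det_nat n A = (\<Prod>i<n. A i i) + (-1) ^ (n - 1) * (\<Prod>i<n. A i (Suc i mod n))"
proof -
  define P where "P = {p. p permutes {..<n}}"
  let ?term = "\<lambda>p. of_int (sign p) * (\<Prod>i<n. A i (p i))"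
  have "cyclic_succ n 0 \<noteq> 0"
    using Suc_mod_neq[OF n, of 0] n by (simp add: cyclic_succ_def)
  then have "id \<noteq> cyclic_succ n" by auto
  have "?term p = 0" if "p \<in> P - {id, cyclic_succ n}" for p
  proof -
    have p: "p permutes {..<n}" and "p \<noteq> id" "p \<noteq> cyclic_succ n" using that by (simp_all add: P_def)
    then obtain i where i: "i < n" "p i \<noteq> i" "p i \<noteq> Suc i mod n"
      using permutes_succ_or_fixed[OF n p] by blast
    then have "A i (p i) = 0" using zero permutes_in_image[OF p] by simp
    then show ?thesis using i(1) by simp blast
  qed
  moreover have "{id, cyclic_succ n} \<subseteq> P"
    by (simp add: P_def permutes_id cyclic_succ_permutes)
  moreover have "finite P" unfolding P_def by (simp add: finite_permutations)
  ultimately have "det_nat n A = (\<Sum>p\<in>{id, cyclic_succ n}. ?term p)"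
    unfolding det_nat_def P_def[symmetric] by (intro sum.mono_neutral_right) blast+
  also have "\<dots> = ?term id + ?term (cyclic_succ n)"
    using \<open>id \<noteq> cyclic_succ n\<close> by (subst sum.insert) auto
  also have "\<dots> = (\<Prod>i<n. A i i) + (-1) ^ (n - 1) * (\<Prod>i<n. A i (cyclic_succ n i))"
    using n by (simp add: sign_cyclic_succ)
  also have "(\<Prod>i<n. A i (cyclic_succ n i)) = (\<Prod>i<n. A i (Suc i mod n))"
    by (rule prod.cong) (auto simp: cyclic_succ_def)
  finally show ?thesis .
qed

lemma partial_deriv_eqI:
  assumes "((\<lambda>t. f (u(j := t))) has_real_derivative D) (at (u j))"
  shows "partial_deriv f u j = D"
  using assms by (simp add: partial_deriv_def DERIV_imp_deriv)

lemma partial_deriv_cyc_map: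
  assumes n: "n \<ge> 2" and i: "i < n" and cos: "\<forall>k<n. cos (u k) \<noteq> 0"
  shows "partial_deriv (\<lambda>v. cyc_map n v i) u i = cos (u i) / cos (u (Suc i mod n))"
    and "partial_deriv (\<lambda>v. cyc_map n v i) u (Suc i mod n) = cyc_map n u i * tan (u (Suc i mod n))"
    and "j \<noteq> i \<Longrightarrow> j \<noteq> Suc i mod n \<Longrightarrow> partial_deriv (\<lambda>v. cyc_map n v i) u j = 0"
proof -
  let ?s = "Suc i mod n"
  have "?s \<noteq> i" using Suc_mod_neq[OF n i] .
  have "cos (u ?s) \<noteq> 0" using cos n by simp
  show "partial_deriv (\<lambda>v. cyc_map n v i) u i = cos (u i) / cos (u ?s)"
    using \<open>?s \<noteq> i\<close> \<open>cos (u ?s) \<noteq> 0\<close>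
    by (intro partial_deriv_eqI) (auto simp: cyc_map_def intro!: derivative_eq_intros)
  show "partial_deriv (\<lambda>v. cyc_map n v i) u ?s = cyc_map n u i * tan (u ?s)"
    using \<open>?s \<noteq> i\<close> \<open>cos (u ?s) \<noteq> 0\<close>
    by (intro partial_deriv_eqI)
      (auto simp: cyc_map_def tan_def power2_eq_square intro!: derivative_eq_intros)
  show "partial_deriv (\<lambda>v. cyc_map n v i) u j = 0" if "j \<noteq> i" "j \<noteq> ?s"
    using that by (simp add: partial_deriv_def cyc_map_def)
qed

lemma partial_deriv_cyc_map_one:
  assumes "cos (u 0) \<noteq> 0"
  shows "partial_deriv (\<lambda>v. cyc_map 1 v 0) u 0 = 1 + (cyc_map 1 u 0)\<^sup>2"
  using assms by (intro partial_deriv_eqI)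
    (auto simp: cyc_map_def power2_eq_square field_simps intro!: derivative_eq_intros)

lemma jacobian_det_one: "jacobian_det 1 F u = partial_deriv (\<lambda>v. F v 0) u 0"
proof -
  have "{p. p permutes {..<1::nat}} = {id}" by (simp add: lessThan_Suc)
  then show ?thesis by (simp add: jacobian_det_def det_nat_def)
qed

lemma prod_cyc_map_eq_prod_tan:
  "(\<Prod>i<n. cyc_map n u i) = (\<Prod>i<n. tan (u i))"
  by (simp add: cyc_map_def tan_def prod_dividef prod_cyclic_shift[of "\<lambda>i. cos (u i)"])

theorem lemma1:
  fixes n :: nat and u :: "nat \<Rightarrow> real"
  assumes "n \<ge> 1"
    and "\<forall>i<n. cos (u i) \<noteq> 0"
  shows "jacobian_det n (cyc_map n) u =
           (if even n then 1 - (\<Prod>i<n. cyc_map n u i)^2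
                      else 1 + (\<Prod>i<n. cyc_map n u i)^2)"
proof (cases "n = 1")
  case True
  then show ?thesis
    using assms(2) jacobian_det_one partial_deriv_cyc_map_one[of u] by simp
next
  case False
  then have n: "n \<ge> 2" using assms(1) by simp
  let ?x = "\<Prod>i<n. cyc_map n u i"
  have "jacobian_det n (cyc_map n) u
      = (\<Prod>i<n. cos (u i) / cos (u (Suc i mod n)))
        + (-1) ^ (n - 1) * (\<Prod>i<n. cyc_map n u i * tan (u (Suc i mod n)))"
    unfolding jacobian_det_def using partial_deriv_cyc_map[OF n _ assms(2)]
    by (subst det_nat_cyclic_bidiagonal[OF n]) simp_all
  also have "(\<Prod>i<n. cos (u i) / cos (u (Suc i mod n))) = 1"
    using assms(2) by (simp add: prod_dividef prod_cyclic_shift[of "\<lambda>i. cos (u i)"])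
  also have "(\<Prod>i<n. cyc_map n u i * tan (u (Suc i mod n))) = ?x\<^sup>2"
    by (simp add: prod.distrib prod_cyclic_shift[of "\<lambda>i. tan (u i)"]
        prod_cyc_map_eq_prod_tan power2_eq_square)
  finally show ?thesis using n
    by (cases "even n") (auto simp: power_minus1_odd elim!: evenE oddE)
qed

end
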